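(* Let $N\ge3$ and let $G$ be the graph on vertices $\{u_{1j},b_{1j},u_{2j}: j\in[N]\}$ with edges $u_{1j}\sim u_{1k}$ and $u_{2j}\sim u_{2k}$ for $j\ne k$, $b_{1j}\sim u_{1k}$ for all $j,k$, and $u_{1j}\sim u_{2j}$, $u_{2j}\sim b_{1j}$ for all $j$. For $U\subseteq[N]$ with $2\le|U|\le N-1$, $m\in[N]\setminus U$ and $U\subseteq V\subseteq[N]$, let $\mathbf v(m,U,V)$ be the weight vector with $u_{1m}=|U|^{-1}$, $b_{1j}=1-|U|^{-1}$ for $j\in V$, $u_{2j}=|U|^{-1}$ for $j\in U$, and all other coordinates $0$. Then the fractional weighted chromatic number of $G$ with weight vector $\mathbf v(m,U,V)$ is at most $1+|U|^{-1}-|U|^{-2}$, and hence at most $1.25$.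
   Context: The fractional weighted chromatic number of a graph with weights $w\ge0$ on vertices is $\min\sum_i\lambda_i$ over nonnegative reals $\lambda_i$ and stable sets $S_i$ with $\sum_i\lambda_i\chi^{S_i}=w$, where $\chi^S$ is the incidence vector of $S$. *)

theory Defs
  imports Main "HOL-Library.Indicator_Function" Complex_Main
begin

definition stable_set :: "'v set \<Rightarrow> ('v \<Rightarrow> 'v \<Rightarrow> bool) \<Rightarrow> 'v set \<Rightarrow> bool" where
  "stable_set Vs E S \<longleftrightarrow> S \<subseteq> Vs \<and> (\<forall>x\<in>S. \<forall>y\<in>S. \<not> E x y)"

definition stable_sets :: "'v set \<Rightarrow> ('v \<Rightarrow> 'v \<Rightarrow> bool) \<Rightarrow> 'v set set" where
  "stable_sets Vs E = {S. stable_set Vs E S}"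

text \<open>Fractional weighted chromatic number: minimum of the total weight
sum over nonnegative coefficients on stable sets whose weighted sum of
incidence vectors equals w on Vs (for finite Vs there are finitely many
stable sets, so a family of coefficients is a function on them).\<close>

definition frac_wchrom :: "'v set \<Rightarrow> ('v \<Rightarrow> 'v \<Rightarrow> bool) \<Rightarrow> ('v \<Rightarrow> real) \<Rightarrow> real" where
  "frac_wchrom Vs E w = Inf {(\<Sum>S\<in>stable_sets Vs E. lam S) | lam.
      (\<forall>S\<in>stable_sets Vs E. lam S \<ge> 0) \<and>
      (\<forall>v\<in>Vs. (\<Sum>S\<in>stable_sets Vs E. lam S * indicator S v) = w v)}"

datatype vtx = U1 nat | B1 nat | U2 nat

definition G_verts :: "nat \<Rightarrow> vtx set" where
  "G_verts N = U1 ` {1..N} \<union> B1 ` {1..N} \<union> U2 ` {1..N}"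

fun G_edge0 :: "vtx \<Rightarrow> vtx \<Rightarrow> bool" where
  "G_edge0 (U1 j) (U1 k) = (j \<noteq> k)"
| "G_edge0 (U2 j) (U2 k) = (j \<noteq> k)"
| "G_edge0 (B1 j) (U1 k) = True"
| "G_edge0 (U1 j) (U2 k) = (j = k)"
| "G_edge0 (U2 j) (B1 k) = (j = k)"
| "G_edge0 _ _ = False"

definition G_adj :: "vtx \<Rightarrow> vtx \<Rightarrow> bool" where
  "G_adj x y \<longleftrightarrow> G_edge0 x y \<or> G_edge0 y x"

definition wvec :: "nat \<Rightarrow> nat set \<Rightarrow> nat set \<Rightarrow> vtx \<Rightarrow> real" where
  "wvec m U V x = (case x of
      U1 j \<Rightarrow> (if j = m then 1 / real (card U) else 0)
    | B1 j \<Rightarrow> (if j \<in> V then 1 - 1 / real (card U) else 0)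
    | U2 j \<Rightarrow> (if j \<in> U then 1 / real (card U) else 0))"

end

theory Submission
  imports Defs
begin

text \<open>With \<open>t = 1 / |U|\<close>, the weight is an explicit fractional colouring: each star
\<open>{u\<^sub>2\<^sub>j} \<union> {b\<^sub>1\<^sub>i : i \<in> V, i \<noteq> j}\<close> (\<open>j \<in> U\<close>) gets \<open>t - t\<^sup>2\<close>, each pair \<open>{u\<^sub>1\<^sub>m, u\<^sub>2\<^sub>j}\<close> (\<open>j \<in> U\<close>)
gets \<open>t\<^sup>2\<close>, and \<open>{b\<^sub>1\<^sub>j : j \<in> U}\<close> gets \<open>t (1 - t)\<close>. The total is
\<open>|U| (t - t\<^sup>2) + |U| t\<^sup>2 + t (1 - t) = 1 + t - t\<^sup>2\<close>, which never exceeds \<open>5/4\<close>.\<close>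

lemma finite_stable_sets:
  assumes "finite Vs"
  shows "finite (stable_sets Vs E)"
proof -
  have "stable_sets Vs E \<subseteq> Pow Vs"
    by (auto simp: stable_sets_def stable_set_def)
  then show ?thesis
    using assms finite_subset by blast
qed

text \<open>An indexed family of stable sets may repeat sets; the coefficient of a stable set
is the total weight of the indices naming it.\<close>

lemma frac_wchrom_le_cover:
  fixes F :: "'i \<Rightarrow> 'v set" and c :: "'i \<Rightarrow> real"
  assumes "finite Vs" and "finite I"
    and stable: "\<And>i. i \<in> I \<Longrightarrow> stable_set Vs E (F i)"
    and nonneg: "\<And>i. i \<in> I \<Longrightarrow> c i \<ge> 0"
    and covers: "\<And>v. v \<in> Vs \<Longrightarrow> (\<Sum>i\<in>I. c i * indicator (F i) v) = w v"
  shows "frac_wchrom Vs E w \<le> (\<Sum>i\<in>I. c i)"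
proof -
  define SS where "SS = stable_sets Vs E"
  define lam where "lam S = (\<Sum>i\<in>{i\<in>I. F i = S}. c i)" for S
  have fin: "finite SS"
    unfolding SS_def using assms(1) by (rule finite_stable_sets)
  have image: "F ` I \<subseteq> SS"
    using stable by (auto simp: SS_def stable_sets_def)
  have "(\<Sum>S\<in>SS. lam S * indicator S v) = (\<Sum>i\<in>I. c i * indicator (F i) v)" for v
  proof -
    have "(\<Sum>S\<in>SS. lam S * indicator S v)
        = (\<Sum>S\<in>SS. \<Sum>i\<in>{i\<in>I. F i = S}. c i * indicator (F i) v)"
      unfolding lam_def by (rule sum.cong) (auto simp: sum_distrib_right)
    also have "\<dots> = (\<Sum>i\<in>I. c i * indicator (F i) v)"
      by (rule sum.group[OF assms(2) fin image])
    finally show ?thesis .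
  qed
  moreover have "(\<Sum>S\<in>SS. lam S) = (\<Sum>i\<in>I. c i)"
    unfolding lam_def by (rule sum.group[OF assms(2) fin image])
  moreover have "\<forall>S\<in>SS. lam S \<ge> 0"
    using nonneg by (auto simp: lam_def intro: sum_nonneg)
  ultimately have mem: "(\<Sum>i\<in>I. c i) \<in> {(\<Sum>S\<in>SS. lam S) | lam. (\<forall>S\<in>SS. lam S \<ge> 0) \<and>
      (\<forall>v\<in>Vs. (\<Sum>S\<in>SS. lam S * indicator S v) = w v)}"
    unfolding mem_Collect_eq using covers by (intro exI[of _ lam]) auto
  have "bdd_below {(\<Sum>S\<in>SS. lam S) | lam. (\<forall>S\<in>SS. lam S \<ge> 0) \<and>
      (\<forall>v\<in>Vs. (\<Sum>S\<in>SS. lam S * indicator S v) = w v)}"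
    by (rule bdd_belowI[where m = 0]) (auto intro: sum_nonneg)
  with mem show ?thesis
    unfolding frac_wchrom_def SS_def[symmetric] by (rule cInf_lower)
qed

datatype cover_index = Star nat | Matching nat | Bottom

definition cover_indices :: "nat set \<Rightarrow> cover_index set" where
  "cover_indices U = Star ` U \<union> Matching ` U \<union> {Bottom}"

definition cover_set :: "nat \<Rightarrow> nat set \<Rightarrow> nat set \<Rightarrow> cover_index \<Rightarrow> vtx set" where
  "cover_set m U V i = (case i of
      Star j \<Rightarrow> insert (U2 j) (B1 ` (V - {j}))
    | Matching j \<Rightarrow> {U1 m, U2 j}
    | Bottom \<Rightarrow> B1 ` U)"

lemma sum_cover_indices:
  assumes "finite U"
  shows "(\<Sum>i\<in>cover_indices U. g i) = (\<Sum>j\<in>U. g (Star j)) + (\<Sum>j\<in>U. g (Matching j)) + g Bottom"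
proof -
  have "(\<Sum>i\<in>cover_indices U. g i) = sum g (Star ` U) + sum g (Matching ` U) + g Bottom"
    unfolding cover_indices_def using assms
    by (subst sum.union_disjoint, auto)+
  then show ?thesis
    by (simp add: sum.reindex inj_on_def)
qed

lemma stable_cover_set:
  assumes "U \<subseteq> {1..N}" and "V \<subseteq> {1..N}" and "m \<in> {1..N}" and "m \<notin> U"
    and "i \<in> cover_indices U"
  shows "stable_set (G_verts N) G_adj (cover_set m U V i)"
  using assms
  by (fastforce simp: cover_indices_def cover_set_def stable_set_def G_verts_def G_adj_def)
definition cover_weight :: "real \<Rightarrow> cover_index \<Rightarrow> real" where
  "cover_weight t i = (case i of Star _ \<Rightarrow> t - t\<^sup>2 | Matching _ \<Rightarrow> t\<^sup>2 | Bottom \<Rightarrow> t * (1 - t))"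

lemma sum_cover_weight:
  fixes t :: real
  assumes "finite U"
  shows "(\<Sum>i\<in>cover_indices U. cover_weight t i) = card U * t + t * (1 - t)"
  using assms by (simp add: sum_cover_indices cover_weight_def algebra_simps)

lemma cover_weight_nonneg:
  assumes "0 \<le> t" and "t \<le> 1"
  shows "cover_weight t i \<ge> 0"
proof -
  have "t\<^sup>2 \<le> t"
    using assms by (simp add: power2_eq_square mult_left_le)
  then show ?thesis
    using assms by (simp add: cover_weight_def split: cover_index.split)
qed

lemma cover_set_covers_wvec:
  assumes "finite U" and "U \<noteq> {}" and "m \<notin> U" and "U \<subseteq> V"
  defines "t \<equiv> 1 / real (card U)"
  shows "(\<Sum>i\<in>cover_indices U. cover_weight t i * indicator (cover_set m U V i) v) = wvec m U V v"
proof -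
  define k where "k = real (card U)"
  have kt: "k * t = 1"
    using assms(1,2) by (simp add: k_def t_def)
  have "(\<Sum>i\<in>cover_indices U. cover_weight t i * indicator (cover_set m U V i) v)
      = (t - t\<^sup>2) * (\<Sum>j\<in>U. indicator (insert (U2 j) (B1 ` (V - {j}))) v)
        + t\<^sup>2 * (\<Sum>j\<in>U. indicator {U1 m, U2 j} v) + t * (1 - t) * indicator (B1 ` U) v"
    using assms(1)
    by (simp add: sum_cover_indices cover_weight_def cover_set_def sum_distrib_left)
  also have "\<dots> = wvec m U V v"
  proof (cases v)
    case (U1 x)
    have "(\<Sum>j\<in>U. indicator (insert (U2 j) (B1 ` (V - {j}))) v) = (0 :: real)"
      "(\<Sum>j\<in>U. indicator {U1 m, U2 j} v) = (if x = m then k else 0)"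
      using U1 by (simp_all add: indicator_def image_iff k_def)
    with U1 kt show ?thesis
      by (simp add: wvec_def indicator_def image_iff t_def power2_eq_square)
  next
    case (U2 x)
    have "(\<Sum>j\<in>U. indicator (insert (U2 j) (B1 ` (V - {j}))) v) = (indicator U x :: real)"
      "(\<Sum>j\<in>U. indicator {U1 m, U2 j} v) = (indicator U x :: real)"
      using assms(1) U2 by (simp_all add: indicator_def image_iff)
    with U2 show ?thesis
      by (simp add: wvec_def indicator_def image_iff t_def power2_eq_square)
  next
    case (B1 x)
    have "(\<Sum>j\<in>U. indicator (insert (U2 j) (B1 ` (V - {j}))) v)
        = (if x \<in> V then real (card (U - {x})) else 0)"
      using assms(1) B1 by (simp add: indicator_def image_iff sum.If_cases Collect_neg_eq Diff_eq)
    moreover have "real (card (U - {x})) = (if x \<in> U then k - 1 else k)"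
      using assms(1,2) by (auto simp: k_def card_Diff_singleton card_gt_0_iff Suc_le_eq)
    ultimately show ?thesis
      using B1 kt assms(4)
      by (auto simp: indicator_def wvec_def t_def[symmetric] algebra_simps power2_eq_square)
  qed
  finally show ?thesis .
qed

theorem theorem11:
  fixes N m :: nat and U V :: "nat set"
  assumes "N \<ge> 3"
    and "U \<subseteq> {1..N}" and "2 \<le> card U" and "card U \<le> N - 1"
    and "m \<in> {1..N} - U"
    and "U \<subseteq> V" and "V \<subseteq> {1..N}"
  shows "frac_wchrom (G_verts N) G_adj (wvec m U V)
           \<le> 1 + 1 / real (card U) - 1 / (real (card U))^2
       \<and> frac_wchrom (G_verts N) G_adj (wvec m U V) \<le> 1.25"
proof -
  define t where "t = 1 / real (card U)"
  have finite_U: "finite U" and U_ne: "U \<noteq> {}"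
    using assms(2,3) finite_subset by fastforce+
  have t_bounds: "0 \<le> t" "t \<le> 1"
    using assms(3) by (auto simp: t_def)
  have "frac_wchrom (G_verts N) G_adj (wvec m U V) \<le> (\<Sum>i\<in>cover_indices U. cover_weight t i)"
  proof (rule frac_wchrom_le_cover)
    show "finite (G_verts N)"
      by (simp add: G_verts_def)
    show "finite (cover_indices U)"
      using finite_U by (simp add: cover_indices_def)
    show "stable_set (G_verts N) G_adj (cover_set m U V i)" if "i \<in> cover_indices U" for i
      using assms(2,5,7) that by (intro stable_cover_set) auto
    show "cover_weight t i \<ge> 0" for i
      using t_bounds by (rule cover_weight_nonneg)
    show "(\<Sum>i\<in>cover_indices U. cover_weight t i * indicator (cover_set m U V i) v) = wvec m U V v"
      for v
      unfolding t_def using finite_U U_ne assms(5,6) by (intro cover_set_covers_wvec) auto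
  qed
  also have "\<dots> = 1 + t - t\<^sup>2"
    using finite_U U_ne by (simp add: sum_cover_weight t_def algebra_simps power2_eq_square)
  finally have bound: "frac_wchrom (G_verts N) G_adj (wvec m U V) \<le> 1 + t - t\<^sup>2" .
  moreover have "1 + t - t\<^sup>2 \<le> 1.25"
    using zero_le_power2[of "t - 1/2"] by (simp add: power2_eq_square algebra_simps)
  ultimately show ?thesis
    by (simp add: t_def power_one_over)
qed

end
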